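(* Define \[ \Lambda_n(p_1,p_2,p_3)=\frac12\,\frac1{(n+1)!}\sum_{m=1}^{n+1}S_{n+1}^{(m)}\Bigl(\frac{2-\phi}4\Bigr)^m\sum_{k=0}^m\binom mk\Bigl(\frac1{P(2-\phi)}\Bigr)^kL(-2k,\chi_{2P}^{(1,1,1)}),\qquad \phi=\phi(p_1,p_2,p_3). \] Then the coefficients $\lambda_n$ of $\tau_\infty(\Sigma(p_1,p_2,p_3))=\sum_{n\ge0}\lambda_n(q-1)^n$ are $\lambda_n(\Sigma(p_1,p_2,p_3))=\Lambda_n(p_1,p_2,p_3)$ when $\frac1{p_1}+\frac1{p_2}+\frac1{p_3}<1$, and $\lambda_n(\Sigma(2,3,5))=\Lambda_n(2,3,5)+(-1)^{n+1}$.
   Context: $p_1,p_2,p_3$ pairwise coprime positive integers, $P=p_1p_2p_3$, $\phi=3-\frac1P+12(s(p_2p_3,p_1)+s(p_1p_3,p_2)+s(p_1p_2,p_3))$ with Dedekind sums $s(b,a)=\sum_{k=1}^{a-1}((k/a))((kb/a))$ ($((x))=x-\lfloor x\rfloor-\frac12$ for $x\notin\mathbb Z$, $0$ otherwise). $\chi_{2P}^{(1,1,1)}$: odd $2P$-periodic, $\chi(n)=1$ if $n\equiv P(1+\sum_j\varepsilon_j/p_j)\pmod{2P}$ with signs $\varepsilon_1\varepsilon_2\varepsilon_3=-1$, $-1$ if with product $1$, $0$ otherwise; $L(-2k,\chi)=-\frac{(2P)^{2k}}{2k+1}\sum_{j=1}^{2P}\chi(j)B_{2k+1}(\frac j{2P})$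 with Bernoulli polynomials $B_n$. $S_n^{(m)}$ are Stirling numbers of the first kind: $\prod_{j=0}^{n-1}(x-j)=\sum_mS_n^{(m)}x^m$. The formal power series $\tau_\infty$ in $q-1$ (with $\log q=\log(1+(q-1))$, $q^a=\exp(a\log q)$) is defined by: for $\sum1/p_j<1$, $q^{\phi/4-1/2}(q-1)\tau_\infty(\Sigma(p_1,p_2,p_3))=\frac12\sum_{k\ge0}\frac{L(-2k,\chi_{2P}^{(1,1,1)})}{k!}\bigl(\frac{\log q}{4P}\bigr)^k$; for the Poincaré sphere ($P=30$), $q^{121/120}(q-1)\tau_\infty(\Sigma(2,3,5))=q^{1/120}+\frac12\sum_{k\ge0}\frac{L(-2k,\chi_{60}^{(1,1,1)})}{k!}\bigl(\frac{\log q}{120}\bigr)^k$, where $\chi_{60}^{(1,1,1)}(n)=-1$ for $n\equiv1,11,19,29$, $+1$ for $n\equiv31,41,49,59\pmod{60}$, $0$ otherwise, and $L(-2k,\chi_{60}^{(1,1,1)})$ is given by the same Bernoulli formula with $2P=60$. *)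

theory Defs
  imports "HOL-Computational_Algebra.Computational_Algebra"
begin

(* Bernoulli numbers, convention B_1 = -1/2:  sum_{k=0}^{n} C(n+1,k) B_k = 0 for n >= 1 *)
fun bernoulli_num :: "nat \<Rightarrow> real" where
  "bernoulli_num n = (if n = 0 then 1
     else - (\<Sum>k<n. of_nat ((n + 1) choose k) * bernoulli_num k) / of_nat (n + 1))"

definition bernoulli_poly :: "nat \<Rightarrow> real \<Rightarrow> real" where
  "bernoulli_poly n x = (\<Sum>k\<le>n. of_nat (n choose k) * bernoulli_num k * x ^ (n - k))"

definition sawtooth :: "real \<Rightarrow> real" where
  "sawtooth x = (if x \<in> \<int> then 0 else x - of_int \<lfloor>x\<rfloor> - 1/2)"

definition dedekind_sum :: "nat \<Rightarrow> nat \<Rightarrow> real" where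
  "dedekind_sum b a = (\<Sum>k=1..a-1. sawtooth (real k / real a) * sawtooth (real k * real b / real a))"

definition phi :: "nat \<Rightarrow> nat \<Rightarrow> nat \<Rightarrow> real" where
  "phi p1 p2 p3 = (let P = real (p1 * p2 * p3) in
     3 - 1 / P + 12 * (dedekind_sum (p2 * p3) p1 + dedekind_sum (p1 * p3) p2 + dedekind_sum (p1 * p2) p3))"

(* n = P(1 + e1/p1 + e2/p2 + e3/p3) mod 2P, with signs e_j in {1,-1} *)
definition chi_cond :: "nat \<Rightarrow> nat \<Rightarrow> nat \<Rightarrow> int \<Rightarrow> int \<Rightarrow> int \<Rightarrow> int \<Rightarrow> bool" where
  "chi_cond p1 p2 p3 e1 e2 e3 n \<longleftrightarrow> e1 \<in> {1, -1} \<and> e2 \<in> {1, -1} \<and> e3 \<in> {1, -1} \<and>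
     n mod int (2*p1*p2*p3) =
       (int (p1*p2*p3) + e1 * int (p2*p3) + e2 * int (p1*p3) + e3 * int (p1*p2)) mod int (2*p1*p2*p3)"

definition chi :: "nat \<Rightarrow> nat \<Rightarrow> nat \<Rightarrow> int \<Rightarrow> real" where
  "chi p1 p2 p3 n =
     (if \<exists>e1 e2 e3. chi_cond p1 p2 p3 e1 e2 e3 n \<and> e1 * e2 * e3 = -1 then 1
      else if \<exists>e1 e2 e3. chi_cond p1 p2 p3 e1 e2 e3 n \<and> e1 * e2 * e3 = 1 then -1
      else 0)"

(* L(-2k, chi_{2P}^{(1,1,1)}) *)
definition Lval :: "nat \<Rightarrow> nat \<Rightarrow> nat \<Rightarrow> nat \<Rightarrow> real" where
  "Lval p1 p2 p3 k = (let N = 2 * p1 * p2 * p3 in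
     - (real N ^ (2 * k) / real (2 * k + 1)) *
       (\<Sum>j=1..N. chi p1 p2 p3 (int j) * bernoulli_poly (2 * k + 1) (real j / real N)))"

definition stirling1 :: "nat \<Rightarrow> nat \<Rightarrow> real" where
  "stirling1 n m = coeff (\<Prod>j<n. [:- real j, 1:]) m"

(* The formal power series in X = q - 1:
   sum_{k>=0} L(-2k,chi)/k! * (log q / (4P))^k,  log q = log(1 + X).
   Since log q has zero constant term, the n-th coefficient only involves k <= n. *)
definition Lseries :: "nat \<Rightarrow> nat \<Rightarrow> nat \<Rightarrow> real fps" where
  "Lseries p1 p2 p3 = Abs_fps (\<lambda>n. \<Sum>k\<le>n.
     Lval p1 p2 p3 k / fact k * (1 / (4 * real (p1 * p2 * p3))) ^ k * ((fps_ln 1) ^ k $ n))"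

(* q^a = (1 + X)^a = fps_binomial a *)
definition tau_infty :: "nat \<Rightarrow> nat \<Rightarrow> nat \<Rightarrow> real fps" where
  "tau_infty p1 p2 p3 = (THE \<tau>.
     fps_binomial (phi p1 p2 p3 / 4 - 1/2) * fps_X * \<tau> = fps_const (1/2) * Lseries p1 p2 p3)"

definition tau_infty_poincare :: "real fps" where
  "tau_infty_poincare = (THE \<tau>.
     fps_binomial (121/120) * fps_X * \<tau> = fps_binomial (1/120) + fps_const (1/2) * Lseries 2 3 5)"

definition Lambda :: "nat \<Rightarrow> nat \<Rightarrow> nat \<Rightarrow> nat \<Rightarrow> real" where
  "Lambda n p1 p2 p3 = (let \<phi> = phi p1 p2 p3; P = real (p1 * p2 * p3) in
     1/2 * (1 / fact (n + 1)) *
     (\<Sum>m=1..n+1. stirling1 (n + 1) m * ((2 - \<phi>) / 4) ^ m *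
        (\<Sum>k=0..m. of_nat (m choose k) * (1 / (P * (2 - \<phi>))) ^ k * Lval p1 p2 p3 k)))"

end

(*
  With a = (2 - phi)/4 and L the series sum_k L(-2k,chi)/k! (x/(4P))^k, the defining relation
  says that X tau is one half of (1+X)^a L(ln(1+X)) (for the Poincare sphere, plus (1+X)^(-1)).
  The product F = (1+X)^a ln(1+X)^k satisfies (1+X) F' = a F + k (1+X)^a ln(1+X)^(k-1), and this
  recursion shows that N! times the N-th coefficient of F is k! sum_m S(N,m) C(m,k) a^(m-k).
  Summing against L and regrouping with the binomial theorem turns the (n+1)-st coefficient into
  Lambda_n, which needs a <> 0, i.e. phi <> 2: by the congruence 12 a b s(b,a) = b^2 + 1 (mod a)
  for Dedekind sums, P phi = 2P would force p1 to divide (p2 p3)^2.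
  Dividing by X needs a vanishing constant term. For 1/p1 + 1/p2 + 1/p3 < 1 the eight points
  P (1 +- 1/p1 +- 1/p2 +- 1/p3) carrying chi are distinct and lie in (0, 2P), so the B_1-sum
  L(0,chi) cancels; for Sigma(2,3,5) it equals -2 and is compensated by q^(1/120).
*)
theory Submission
  imports Defs "HOL-Number_Theory.Cong"
begin

section \<open>The coefficients of tau_infty\<close>

lemma one_plus_X_mult_deriv_fps_binomial:
  "(1 + fps_X) * fps_deriv (fps_binomial a) = fps_const (a::'a::field_char_0) * fps_binomial a"
proof -
  have "(1 + fps_X :: 'a fps) $ 0 \<noteq> 0" by simp
  then show ?thesis
    by (simp add: fps_binomial_deriv fps_divide_unit mult.left_commute[of "1 + fps_X"] inverse_mult_eq_1')
qed

lemma one_plus_X_mult_deriv_fps_ln: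
  "(1 + fps_X) * fps_deriv (fps_ln (1::'a::field_char_0)) = 1"
proof -
  have "(1 + fps_X :: 'a fps) $ 0 \<noteq> 0" by simp
  then show ?thesis by (simp add: fps_ln_deriv inverse_mult_eq_1')
qed

lemma one_plus_X_mult_deriv_fps_binomial_ln_power:
  fixes a :: "'a::field_char_0"
  shows "(1 + fps_X) * fps_deriv (fps_binomial a * fps_ln 1 ^ k) =
    fps_const a * (fps_binomial a * fps_ln 1 ^ k)
    + fps_const (of_nat k) * (fps_binomial a * fps_ln 1 ^ (k - 1))"
proof -
  have "(1 + fps_X) * fps_deriv (fps_binomial a * fps_ln 1 ^ k) =
      ((1 + fps_X) * fps_deriv (fps_binomial a)) * fps_ln 1 ^ k
      + of_nat k * fps_binomial a * ((1 + fps_X) * fps_deriv (fps_ln 1)) * fps_ln 1 ^ (k - 1)"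
    by (simp add: fps_deriv_power algebra_simps fps_of_nat)
  also have "\<dots> = fps_const a * fps_binomial a * fps_ln 1 ^ k
      + of_nat k * fps_binomial a * 1 * fps_ln 1 ^ (k - 1)"
    by (simp only: one_plus_X_mult_deriv_fps_binomial one_plus_X_mult_deriv_fps_ln)
  finally show ?thesis by (simp add: mult_ac fps_of_nat)
qed

lemma fps_nth_Suc_of_ode:
  fixes F G :: "'a::comm_ring_1 fps"
  assumes "(1 + fps_X) * fps_deriv F = fps_const a * F + fps_const c * G"
  shows "(of_nat N + 1) * F $ Suc N = (a - of_nat N) * F $ N + c * G $ N"
proof -
  have "((1 + fps_X) * fps_deriv F) $ N = (of_nat N + 1) * F $ Suc N + of_nat N * F $ N"
    by (cases N) (simp_all add: distrib_right fps_deriv_nth algebra_simps)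
  moreover have "((1 + fps_X) * fps_deriv F) $ N = a * F $ N + c * G $ N"
    by (simp add: assms)
  ultimately show ?thesis by (simp add: algebra_simps)
qed

lemma stirling1_Suc:
  "stirling1 (Suc N) m = (if m = 0 then 0 else stirling1 N (m - 1)) - of_nat N * stirling1 N m"
proof -
  define p where "p = (\<Prod>j<N. [:- real j, 1:])"
  have "(\<Prod>j<Suc N. [:- real j, 1:]) = smult (- real N) p + pCons 0 p"
    by (simp add: p_def mult_pCons_right)
  then show ?thesis unfolding stirling1_def p_def[symmetric] by (cases m) auto
qed

lemma stirling1_0_left: "stirling1 0 m = (if m = 0 then 1 else 0)"
  unfolding stirling1_def by (simp add: coeff_1)

lemma stirling1_eq_0: "N < m \<Longrightarrow> stirling1 N m = 0"
  by (induction N arbitrary: m) (simp_all add: stirling1_0_left stirling1_Suc)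

lemma stirling1_Suc_0: "stirling1 (Suc N) 0 = 0"
  by (induction N) (simp_all add: stirling1_Suc)

text \<open>The coefficient of \<open>t ^ k\<close> in the falling factorial
  \<open>(a + t)(a + t - 1) \<cdots> (a + t - N + 1) = (\<Sum>m\<le>N. stirling1 N m * (a + t) ^ m)\<close>.\<close>
definition falling_taylor_coeff :: "real \<Rightarrow> nat \<Rightarrow> nat \<Rightarrow> real" where
  "falling_taylor_coeff a k N = (\<Sum>m\<le>N. stirling1 N m * of_nat (m choose k) * a ^ (m - k))"

lemma binomial_Suc_mult_power:
  "of_nat (Suc m choose k) * (a::real) ^ (Suc m - k) =
    a * (of_nat (m choose k) * a ^ (m - k))
    + (if k = 0 then 0 else of_nat (m choose (k - 1)) * a ^ (m - (k - 1)))"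
proof (cases k)
  case (Suc k')
  show ?thesis
  proof (cases "k' < m")
    case True
    then have "Suc m - k = Suc (m - k)" "m - (k - 1) = Suc (m - k)" using Suc by auto
    then show ?thesis using Suc by (simp add: algebra_simps)
  next
    case False
    then show ?thesis using Suc by simp
  qed
qed simp

lemma falling_taylor_coeff_Suc:
  "falling_taylor_coeff a k (Suc N) =
    (a - of_nat N) * falling_taylor_coeff a k N + (if k = 0 then 0 else falling_taylor_coeff a (k - 1) N)"
proof -
  define h where "h m = of_nat (m choose k) * a ^ (m - k)" for m
  have "falling_taylor_coeff a k (Suc N) =
      (\<Sum>m\<le>Suc N. (if m = 0 then 0 else stirling1 N (m - 1)) * h m)
      - of_nat N * (\<Sum>m\<le>Suc N. stirling1 N m * h m)"
    unfolding falling_taylor_coeff_def h_def stirling1_Suc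
    by (simp add: algebra_simps sum_subtractf sum_distrib_left)
  also have "(\<Sum>m\<le>Suc N. (if m = 0 then 0 else stirling1 N (m - 1)) * h m) =
      (\<Sum>m\<le>N. stirling1 N m * h (Suc m))"
    by (subst sum.atMost_Suc_shift) simp
  also have "\<dots> = a * falling_taylor_coeff a k N + (if k = 0 then 0 else falling_taylor_coeff a (k - 1) N)"
    unfolding h_def binomial_Suc_mult_power falling_taylor_coeff_def
    by (simp add: algebra_simps sum.distrib sum_distrib_left)
  also have "(\<Sum>m\<le>Suc N. stirling1 N m * h m) = falling_taylor_coeff a k N"
    unfolding falling_taylor_coeff_def h_def by (simp add: stirling1_eq_0 mult.assoc)
  finally show ?thesis by (simp add: algebra_simps)
qed

lemma fact_mult_fps_binomial_ln_power_nth: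
  "fact N * (fps_binomial a * fps_ln 1 ^ k) $ N = fact k * falling_taylor_coeff a k N"
proof (induction N arbitrary: k)
  case 0
  show ?case by (cases k) (simp_all add: falling_taylor_coeff_def stirling1_0_left fps_power_zeroth)
next
  case (Suc N)
  have "(of_nat N + 1) * (fps_binomial a * fps_ln 1 ^ k) $ Suc N =
      (a - of_nat N) * (fps_binomial a * fps_ln 1 ^ k) $ N
      + of_nat k * (fps_binomial a * fps_ln 1 ^ (k - 1)) $ N"
    by (rule fps_nth_Suc_of_ode[OF one_plus_X_mult_deriv_fps_binomial_ln_power])
  then have "fact (Suc N) * (fps_binomial a * fps_ln 1 ^ k) $ Suc N =
      (a - of_nat N) * (fact N * (fps_binomial a * fps_ln 1 ^ k) $ N)
      + of_nat k * (fact N * (fps_binomial a * fps_ln 1 ^ (k - 1)) $ N)"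
    by (metis (no_types, lifting) fact_Suc mult.assoc mult.left_commute of_nat_Suc add.commute
        distrib_left)
  also have "\<dots> = fact k * falling_taylor_coeff a k (Suc N)"
    unfolding Suc.IH falling_taylor_coeff_Suc by (cases k) (simp_all add: algebra_simps)
  finally show ?case .
qed

lemma fps_compose_nth_atMost:
  fixes f g :: "'a::comm_semiring_1 fps"
  assumes "g $ 0 = 0" and "j \<le> N"
  shows "(f oo g) $ j = (\<Sum>k\<le>N. f $ k * (g ^ k) $ j)"
  unfolding fps_compose_nth atLeast0AtMost
  by (rule sum.mono_neutral_left) (use assms startsby_zero_power_prefix[of g] in \<open>auto simp: not_le\<close>)

lemma fact_mult_fps_binomial_mult_compose_ln_nth:
  fixes f :: "real fps"
  shows "fact N * (fps_binomial a * (f oo fps_ln 1)) $ N =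
    (\<Sum>k\<le>N. f $ k * fact k * falling_taylor_coeff a k N)"
proof -
  have "(fps_binomial a * (f oo fps_ln 1)) $ N =
      (\<Sum>i=0..N. fps_binomial a $ i * (\<Sum>k\<le>N. f $ k * (fps_ln 1 ^ k) $ (N - i)))"
    unfolding fps_mult_nth by (intro sum.cong refl) (simp add: fps_compose_nth_atMost)
  also have "\<dots> = (\<Sum>k\<le>N. f $ k * (fps_binomial a * fps_ln 1 ^ k) $ N)"
    unfolding fps_mult_nth sum_distrib_left by (subst sum.swap) (simp add: mult_ac)
  finally show ?thesis
    by (simp add: sum_distrib_left mult.left_commute[of "fact N"] fact_mult_fps_binomial_ln_power_nth
        mult.assoc)
qed

lemma power_mult_binomial_divide_power:
  assumes "(a::real) \<noteq> 0"
  shows "a ^ m * (of_nat (m choose k) * (c / a) ^ k) = of_nat (m choose k) * c ^ k * a ^ (m - k)"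
proof (cases "k \<le> m")
  case True
  then have "a ^ m = a ^ k * a ^ (m - k)" by (simp flip: power_add)
  then show ?thesis using assms by (simp add: power_divide field_simps)
qed simp

lemma sum_falling_taylor_coeff_eq_stirling_sum:
  assumes "(a::real) \<noteq> 0" and "0 < N"
  shows "(\<Sum>k\<le>N. u k * c ^ k * falling_taylor_coeff a k N) =
    (\<Sum>m=1..N. stirling1 N m * a ^ m * (\<Sum>k=0..m. of_nat (m choose k) * (c / a) ^ k * u k))"
proof -
  have "(\<Sum>m=1..N. stirling1 N m * a ^ m * (\<Sum>k=0..m. of_nat (m choose k) * (c / a) ^ k * u k)) =
      (\<Sum>m\<le>N. stirling1 N m * a ^ m * (\<Sum>k=0..m. of_nat (m choose k) * (c / a) ^ k * u k))"
  proof (rule sum.mono_neutral_left)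
    show "\<forall>m\<in>{..N} - {1..N}.
        stirling1 N m * a ^ m * (\<Sum>k=0..m. of_nat (m choose k) * (c / a) ^ k * u k) = 0"
      using \<open>0 < N\<close> stirling1_Suc_0[of "N - 1"] by (auto simp: Suc_le_eq)
  qed auto
  also have "\<dots> = (\<Sum>m\<le>N. \<Sum>k\<le>N. stirling1 N m * u k * (a ^ m * (of_nat (m choose k) * (c / a) ^ k)))"
  proof (rule sum.cong)
    fix m assume "m \<in> {..N}"
    then have "(\<Sum>k=0..m. of_nat (m choose k) * (c / a) ^ k * u k) =
        (\<Sum>k\<le>N. of_nat (m choose k) * (c / a) ^ k * u k)"
      by (intro sum.mono_neutral_left) auto
    then show "stirling1 N m * a ^ m * (\<Sum>k=0..m. of_nat (m choose k) * (c / a) ^ k * u k) =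
        (\<Sum>k\<le>N. stirling1 N m * u k * (a ^ m * (of_nat (m choose k) * (c / a) ^ k)))"
      by (simp add: sum_distrib_left mult_ac)
  qed simp
  also have "\<dots> = (\<Sum>k\<le>N. \<Sum>m\<le>N. stirling1 N m * u k * (of_nat (m choose k) * c ^ k * a ^ (m - k)))"
    by (subst sum.swap) (simp only: power_mult_binomial_divide_power[OF assms(1)])
  also have "\<dots> = (\<Sum>k\<le>N. u k * c ^ k * falling_taylor_coeff a k N)"
    unfolding falling_taylor_coeff_def by (simp add: sum_distrib_left mult_ac)
  finally show ?thesis ..
qed

lemma Lseries_eq_compose:
  "Lseries p1 p2 p3 =
    Abs_fps (\<lambda>k. Lval p1 p2 p3 k / fact k * (1 / (4 * real (p1 * p2 * p3))) ^ k) oo fps_ln 1"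
  unfolding Lseries_def fps_compose_def atLeast0AtMost by simp

lemma Lambda_eq_fps_nth:
  assumes "phi p1 p2 p3 \<noteq> 2"
  shows "Lambda n p1 p2 p3 =
    1/2 * (fps_binomial ((2 - phi p1 p2 p3) / 4) * Lseries p1 p2 p3) $ Suc n"
proof -
  define a where "a = (2 - phi p1 p2 p3) / 4"
  define c where "c = 1 / (4 * real (p1 * p2 * p3))"
  have "a \<noteq> 0" using assms by (simp add: a_def)
  have c_div_a: "1 / (real (p1 * p2 * p3) * (2 - phi p1 p2 p3)) = c / a"
    by (simp add: a_def c_def)
  have "fact (Suc n) * (fps_binomial a * Lseries p1 p2 p3) $ Suc n =
      (\<Sum>k\<le>Suc n. Lval p1 p2 p3 k * c ^ k * falling_taylor_coeff a k (Suc n))"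
    unfolding Lseries_eq_compose fact_mult_fps_binomial_mult_compose_ln_nth c_def by simp
  also have "\<dots> = (\<Sum>m=1..Suc n. stirling1 (Suc n) m * a ^ m *
      (\<Sum>k=0..m. of_nat (m choose k) * (c / a) ^ k * Lval p1 p2 p3 k))"
    by (rule sum_falling_taylor_coeff_eq_stirling_sum[OF \<open>a \<noteq> 0\<close>]) simp
  finally have "(fps_binomial a * Lseries p1 p2 p3) $ Suc n = (\<Sum>m=1..Suc n. stirling1 (Suc n) m * a ^ m *
      (\<Sum>k=0..m. of_nat (m choose k) * (c / a) ^ k * Lval p1 p2 p3 k)) / fact (Suc n)"
    by (simp add: eq_divide_eq mult.commute)
  then show ?thesis
    unfolding Lambda_def Let_def c_div_a a_def[symmetric] by simp
qed

lemma the_fps_X_quotient: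
  fixes b c g :: "'a::comm_ring_1 fps"
  assumes "b * c = 1" and "g $ 0 = 0"
  shows "(THE \<tau>. b * fps_X * \<tau> = g) = fps_shift 1 (c * g)"
proof (rule the_equality)
  have "fps_X * fps_shift 1 (c * g) = c * g"
    using assms(2) by (intro fps_ext) (simp add: fps_mult_nth_0 split: nat.split)
  then have "b * fps_X * fps_shift 1 (c * g) = (b * c) * g" by (simp add: mult.assoc)
  then show "b * fps_X * fps_shift 1 (c * g) = g" using assms(1) by simp
next
  fix \<tau> assume "b * fps_X * \<tau> = g"
  then have "c * g = (b * c) * \<tau> * fps_X" by (auto simp only: mult_ac)
  then show "\<tau> = fps_shift 1 (c * g)" using assms(1) by (metis fps_shift_times_fps_X' mult_1)
qed

lemma Lseries_nth_0: "Lseries p1 p2 p3 $ 0 = Lval p1 p2 p3 0"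
  by (simp add: Lseries_def)

lemma tau_infty_nth:
  assumes "Lval p1 p2 p3 0 = 0" and "phi p1 p2 p3 \<noteq> 2"
  shows "tau_infty p1 p2 p3 $ n = Lambda n p1 p2 p3"
proof -
  define a where "a = (2 - phi p1 p2 p3) / 4"
  have "phi p1 p2 p3 / 4 - 1/2 = - a" by (simp add: a_def field_simps)
  moreover have "fps_binomial (- a) * fps_binomial a = 1"
    by (simp flip: fps_binomial_add_mult)
  ultimately have "tau_infty p1 p2 p3 =
      fps_shift 1 (fps_binomial a * (fps_const (1/2) * Lseries p1 p2 p3))"
    unfolding tau_infty_def by (intro the_fps_X_quotient) (simp_all add: Lseries_nth_0 assms(1))
  then show ?thesis
    using Lambda_eq_fps_nth[OF assms(2)] by (simp add: a_def mult.left_commute)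
qed

lemma gbinomial_minus_one: "((-1::'a::field_char_0) gchoose k) = (-1) ^ k"
  using gbinomial_minus[of "1::'a" k] by (simp add: binomial_gbinomial[symmetric])

lemma tau_infty_poincare_nth:
  assumes "Lval 2 3 5 0 = -2" and "phi 2 3 5 = 181/30"
  shows "tau_infty_poincare $ n = Lambda n 2 3 5 + (-1) ^ (n + 1)"
proof -
  define a :: real where "a = - (121/120)"
  have inverse: "fps_binomial (121/120) * fps_binomial a = 1"
    by (simp add: a_def flip: fps_binomial_add_mult)
  have product: "fps_binomial a * fps_binomial (1/120) = fps_binomial (-1)"
    by (simp add: a_def flip: fps_binomial_add_mult)
  have tau: "tau_infty_poincare =
      fps_shift 1 (fps_binomial (-1) + fps_binomial a * (fps_const (1/2) * Lseries 2 3 5))"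
    unfolding tau_infty_poincare_def
    by (subst the_fps_X_quotient[OF inverse]) (simp_all add: distrib_left product Lseries_nth_0 assms(1))
  have "tau_infty_poincare $ n = (-1) ^ Suc n + 1/2 * (fps_binomial a * Lseries 2 3 5) $ Suc n"
    unfolding tau by (simp add: gbinomial_minus_one mult.left_commute[of "fps_binomial a"])
  moreover have "(2 - phi 2 3 5) / 4 = a" using assms(2) by (simp add: a_def)
  ultimately show ?thesis using Lambda_eq_fps_nth[of 2 3 5 n] assms(2) by simp
qed

section \<open>Dedekind sums\<close>

lemma sawtooth_of_nat_divide:
  assumes "0 < a" and "\<not> a dvd m"
  shows "sawtooth (real m / real a) = real (m mod a) / real a - 1/2"
proof -
  have "0 < m mod a" using assms(2) by (simp add: dvd_eq_mod_eq_0)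
  have split: "real m / real a = real (m div a) + real (m mod a) / real a"
    using assms(1) by (simp add: field_simps flip: of_nat_mult of_nat_add)
  have floor: "\<lfloor>real m / real a\<rfloor> = int (m div a)"
    by (rule floor_divide_of_nat_eq)
  have "real m / real a \<notin> \<int>"
  proof
    assume "real m / real a \<in> \<int>"
    then have "real m / real a = real (m div a)" using floor by (metis floor_of_int Ints_cases of_int_of_nat_eq)
    then show False using split \<open>0 < m mod a\<close> assms(1) by simp
  qed
  then show ?thesis using split floor by (simp add: sawtooth_def)
qed

lemma bij_betw_mult_mod:
  fixes a b :: nat
  assumes "coprime a b"
  shows "bij_betw (\<lambda>k. k * b mod a) {1..<a} {1..<a}"
proof -
  have inj: "inj_on (\<lambda>k. k * b mod a) {1..<a}"
  proof (rule inj_onI)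
    fix x y assume "x \<in> {1..<a}" "y \<in> {1..<a}" "x * b mod a = y * b mod a"
    then have "[x * b = y * b] (mod a)" by (simp add: cong_def)
    then have "[x = y] (mod a)" using assms by (simp add: cong_mult_rcancel_nat coprime_commute)
    then show "x = y" using \<open>x \<in> {1..<a}\<close> \<open>y \<in> {1..<a}\<close> by (auto intro: cong_less_modulus_unique_nat)
  qed
  have "(\<lambda>k. k * b mod a) ` {1..<a} \<subseteq> {1..<a}"
  proof clarify
    fix k assume "k \<in> {1..<a}"
    then have "\<not> a dvd k" by (auto dest: dvd_imp_le)
    then have "\<not> a dvd k * b" using assms by (simp add: coprime_dvd_mult_left_iff)
    then show "k * b mod a \<in> {1..<a}" using \<open>k \<in> {1..<a}\<close> by (simp add: dvd_eq_mod_eq_0 Suc_le_eq)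
  qed
  with inj show ?thesis by (simp add: bij_betw_def endo_inj_surj)
qed

lemma sum_mult_mod_permute:
  fixes a b :: nat
  assumes "coprime a b"
  shows "(\<Sum>k=1..<a. f (k * b mod a)) = (\<Sum>k=1..<a. f k)"
  using sum.reindex_bij_betw[OF bij_betw_mult_mod[OF assms], of f] .

lemma two_sum_atLeast1_lessThan: "2 * (\<Sum>k=1..<n. int k) = int n * (int n - 1)"
  by (induction n) (simp_all add: algebra_simps)

lemma six_sum_squares_atLeast1_lessThan:
  "6 * (\<Sum>k=1..<n. int k ^ 2) = int n * (int n - 1) * (2 * int n - 1)"
  by (induction n) (simp_all add: algebra_simps power2_eq_square)

lemma of_nat_mod_eq_diff_mult_div: "int (m mod a) = int m - int a * int (m div a)"
  using div_mult_mod_eq[of m a] by (metis add_diff_cancel_left' mult.commute of_nat_add of_nat_mult)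

lemma twelve_mult_sum_mult_div:
  fixes a b :: nat
  assumes "0 < a" and "coprime a b"
  shows "12 * int b * (\<Sum>k=1..<a. int k * int (k * b div a)) =
    (int b ^ 2 - 1) * (int a - 1) * (2 * int a - 1) + 6 * int a * (\<Sum>k=1..<a. int (k * b div a) ^ 2)"
proof -
  define q where "q k = int (k * b div a)" for k
  define Q where "Q = (\<Sum>k=1..<a. int k * q k)"
  define Q2 where "Q2 = (\<Sum>k=1..<a. q k ^ 2)"
  define S2 where "S2 = (\<Sum>k=1..<a. int k ^ 2)"
  have remainder: "int (k * b mod a) = int k * int b - int a * q k" for k
    unfolding q_def of_nat_mod_eq_diff_mult_div by simp
  have "S2 = (\<Sum>k=1..<a. int (k * b mod a) ^ 2)"
    unfolding S2_def by (rule sum_mult_mod_permute[OF assms(2), symmetric])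
  also have "\<dots> = int b ^ 2 * S2 - 2 * int a * int b * Q + int a ^ 2 * Q2"
    unfolding remainder S2_def Q_def Q2_def
    by (simp add: power2_eq_square algebra_simps sum_subtractf sum.distrib sum_distrib_left)
  finally have "int a * (12 * int b * Q) = (int b ^ 2 - 1) * (6 * S2) + 6 * int a ^ 2 * Q2"
    by (simp add: algebra_simps)
  also have "\<dots> = int a * ((int b ^ 2 - 1) * (int a - 1) * (2 * int a - 1) + 6 * int a * Q2)"
    unfolding S2_def six_sum_squares_atLeast1_lessThan by (simp add: algebra_simps power2_eq_square)
  finally show ?thesis using assms(1) unfolding Q_def Q2_def q_def by simp
qed

lemma dedekind_sum_eq_sum_mod:
  fixes a b :: nat
  assumes "0 < a" and "coprime a b"
  shows "4 * real a ^ 2 * dedekind_sum b a =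
    (\<Sum>k=1..<a. (2 * real k - real a) * (2 * real (k * b mod a) - real a))"
proof -
  have saw: "sawtooth (real k / real a) * sawtooth (real k * real b / real a) =
      (2 * real k - real a) * (2 * real (k * b mod a) - real a) / (4 * real a ^ 2)"
    if "k \<in> {1..<a}" for k
  proof -
    have "\<not> a dvd k" using that by (auto dest: dvd_imp_le)
    moreover from this have "\<not> a dvd k * b" using assms(2) by (simp add: coprime_dvd_mult_left_iff)
    ultimately have "sawtooth (real k / real a) = (2 * real k - real a) / (2 * real a)"
        and "sawtooth (real k * real b / real a) = (2 * real (k * b mod a) - real a) / (2 * real a)"
      using that assms(1) sawtooth_of_nat_divide[of a k] sawtooth_of_nat_divide[of a "k * b"]
      by (simp_all add: field_simps)
    then show ?thesis by (simp add: power2_eq_square)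
  qed
  have "{1..a - 1} = {1..<a}" by auto
  then show ?thesis
    unfolding dedekind_sum_def using assms(1) by (simp add: saw sum_distrib_left)
qed

lemma three_sum_centered_mult_mod:
  fixes a b :: nat
  assumes "0 < a" and "coprime a b"
  shows "3 * (\<Sum>k=1..<a. (2 * int k - int a) * (2 * int (k * b mod a) - int a)) =
    int a * (2 * int b * (int a - 1) * (2 * int a - 1)
      - 12 * (\<Sum>k=1..<a. int k * int (k * b div a)) - 3 * int a * (int a - 1))"
proof -
  define r where "r k = k * b mod a" for k
  define S1 where "S1 = (\<Sum>k=1..<a. int k)"
  define S2 where "S2 = (\<Sum>k=1..<a. int k ^ 2)"
  define Q where "Q = (\<Sum>k=1..<a. int k * int (k * b div a))"
  have permute: "(\<Sum>k=1..<a. int (r k)) = S1"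
    unfolding r_def S1_def by (rule sum_mult_mod_permute[OF assms(2)])
  have moment: "(\<Sum>k=1..<a. int k * int (r k)) = int b * S2 - int a * Q"
    unfolding r_def of_nat_mod_eq_diff_mult_div S2_def Q_def
    by (simp add: algebra_simps power2_eq_square sum_subtractf sum_distrib_left)
  have "(\<Sum>k=1..<a. (2 * int k - int a) * (2 * int (r k) - int a)) =
      (\<Sum>k=1..<a. 4 * (int k * int (r k)) - 2 * int a * int k - 2 * int a * int (r k) + int a ^ 2)"
    by (rule sum.cong) (simp_all add: algebra_simps power2_eq_square)
  also have "\<dots> = 4 * (\<Sum>k=1..<a. int k * int (r k)) - 2 * int a * S1
      - 2 * int a * (\<Sum>k=1..<a. int (r k)) + (\<Sum>k=1..<a. int a ^ 2)"
    unfolding S1_def by (simp only: sum.distrib sum_subtractf flip: sum_distrib_left)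
  also have "\<dots> = 4 * (int b * S2 - int a * Q) - 4 * int a * S1 + int a ^ 2 * (int a - 1)"
    unfolding permute moment using assms(1) by (simp add: of_nat_diff)
  finally have "3 * (\<Sum>k=1..<a. (2 * int k - int a) * (2 * int (r k) - int a)) =
      2 * int b * (6 * S2) - 12 * int a * Q - 6 * int a * (2 * S1) + 3 * int a ^ 2 * (int a - 1)"
    by (simp add: algebra_simps)
  then show ?thesis
    unfolding S1_def S2_def Q_def r_def two_sum_atLeast1_lessThan six_sum_squares_atLeast1_lessThan
    by (simp add: algebra_simps power2_eq_square)
qed

lemma dedekind_sum_floor_formula:
  fixes a b :: nat
  assumes "0 < a" and "coprime a b"
  shows "12 * real a * dedekind_sum b a = of_int (2 * int b * (int a - 1) * (2 * int a - 1)
    - 12 * (\<Sum>k=1..<a. int k * int (k * b div a)) - 3 * int a * (int a - 1))"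
    (is "_ = of_int ?I")
proof -
  have "real a * (12 * real a * dedekind_sum b a) = 3 * (4 * real a ^ 2 * dedekind_sum b a)"
    by (simp add: power2_eq_square)
  also have "\<dots> = of_int (3 * (\<Sum>k=1..<a. (2 * int k - int a) * (2 * int (k * b mod a) - int a)))"
    unfolding dedekind_sum_eq_sum_mod[OF assms] by simp
  also have "\<dots> = real a * of_int ?I"
    unfolding three_sum_centered_mult_mod[OF assms] by simp
  finally show ?thesis using assms(1) by simp
qed

lemma dedekind_sum_congruence:
  fixes a b :: nat
  assumes "0 < a" and "coprime a b"
  obtains I :: int where "12 * real a * dedekind_sum b a = of_int I"
    and "[int b * I = int b ^ 2 + 1] (mod int a)"
proof
  define Q where "Q = (\<Sum>k=1..<a. int k * int (k * b div a))"
  define Q2 where "Q2 = (\<Sum>k=1..<a. int (k * b div a) ^ 2)"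
  define I where "I = 2 * int b * (int a - 1) * (2 * int a - 1) - 12 * Q - 3 * int a * (int a - 1)"
  show "12 * real a * dedekind_sum b a = of_int I"
    unfolding I_def Q_def by (rule dedekind_sum_floor_formula[OF assms])
  have "12 * int b * Q = (int b ^ 2 - 1) * (int a - 1) * (2 * int a - 1) + 6 * int a * Q2"
    unfolding Q_def Q2_def by (rule twelve_mult_sum_mult_div[OF assms])
  then have "int b * I - (int b ^ 2 + 1) =
      int a * ((int b ^ 2 + 1) * (2 * int a - 3) - 6 * Q2 - 3 * int b * (int a - 1))"
    unfolding I_def by (simp add: algebra_simps power2_eq_square)
  then show "[int b * I = int b ^ 2 + 1] (mod int a)"
    by (simp add: cong_iff_dvd_diff)
qed

lemma phi_ne_2:
  fixes p1 p2 p3 :: nat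
  assumes "1 < p1" and "0 < p2" and "0 < p3"
    and "coprime p1 p2" and "coprime p1 p3" and "coprime p2 p3"
  shows "phi p1 p2 p3 \<noteq> 2"
proof
  assume phi_eq: "phi p1 p2 p3 = 2"
  define b where "b = p2 * p3"
  have "coprime p1 b" using assms(4,5) by (simp add: b_def)
  obtain I1 :: int where I1: "12 * real p1 * dedekind_sum b p1 = of_int I1"
      "[int b * I1 = int b ^ 2 + 1] (mod int p1)"
    using dedekind_sum_congruence[OF _ \<open>coprime p1 b\<close>] assms(1) by auto
  have "coprime p2 (p1 * p3)" "coprime p3 (p1 * p2)"
    using assms(4-6) by (simp_all add: coprime_commute)
  then obtain I2 I3 :: int where I2: "12 * real p2 * dedekind_sum (p1 * p3) p2 = of_int I2"
      and I3: "12 * real p3 * dedekind_sum (p1 * p2) p3 = of_int I3"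
    using dedekind_sum_congruence assms(2,3) by meson
  have "real (p1 * p2 * p3) * phi p1 p2 p3 = 3 * real (p1 * p2 * p3) - 1
      + real b * (12 * real p1 * dedekind_sum b p1)
      + real (p1 * p3) * (12 * real p2 * dedekind_sum (p1 * p3) p2)
      + real (p1 * p2) * (12 * real p3 * dedekind_sum (p1 * p2) p3)"
    using assms(1-3) by (simp add: phi_def b_def field_simps)
  then have "real_of_int (int b * I1) =
      real_of_int (1 - int p1 * (int (p2 * p3) + int p3 * I2 + int p2 * I3))"
    unfolding phi_eq I1(1) I2 I3 by (simp add: b_def algebra_simps)
  then have "int b * I1 - 1 = int p1 * - (int (p2 * p3) + int p3 * I2 + int p2 * I3)"
    by (simp only: of_int_eq_iff)
  then have "[int b * I1 = 1] (mod int p1)"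
    by (simp add: cong_iff_dvd_diff)
  with I1(2) have "[int b ^ 2 + 1 = 0 + 1] (mod int p1)"
    by (metis add_0 cong_sym cong_trans)
  then have "int p1 dvd int b ^ 2"
    by (simp only: cong_add_rcancel cong_0_iff)
  moreover have "coprime (int p1) (int b ^ 2)" using \<open>coprime p1 b\<close> by simp
  ultimately have "is_unit (int p1)" by (metis coprime_absorb_left)
  then show False using assms(1) by simp
qed

lemma phi_poincare: "phi 2 3 5 = 181/30"
proof -
  have "{1..<2} = {1::nat}" "{1..<3} = {1, 2::nat}" "{1..<5} = {1, 2, 3, 4::nat}" by auto
  then have "dedekind_sum 15 2 = 0" "dedekind_sum 10 3 = 1/18" "dedekind_sum 6 5 = 1/5"
    using dedekind_sum_eq_sum_mod[of 2 15] dedekind_sum_eq_sum_mod[of 3 10]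
      dedekind_sum_eq_sum_mod[of 5 6]
    by (simp_all add: coprime_iff_gcd_eq_1 gcd_non_0_nat)
  then show ?thesis by (simp add: phi_def)
qed

section \<open>The value of the L-function at zero\<close>

definition signs :: "(int \<times> int \<times> int) set" where
  "signs = {1, -1} \<times> {1, -1} \<times> {1, -1}"

definition chi_point :: "nat \<Rightarrow> nat \<Rightarrow> nat \<Rightarrow> int \<times> int \<times> int \<Rightarrow> int" where
  "chi_point p1 p2 p3 e = (case e of (e1, e2, e3) \<Rightarrow>
     int (p1 * p2 * p3) + e1 * int (p2 * p3) + e2 * int (p1 * p3) + e3 * int (p1 * p2))"

definition sign_product :: "int \<times> int \<times> int \<Rightarrow> int" where
  "sign_product e = (case e of (e1, e2, e3) \<Rightarrow> e1 * e2 * e3)"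

lemma sum_signs:
  "(\<Sum>e\<in>signs. f e) = f (1, 1, 1) + f (1, 1, -1) + f (1, -1, 1) + f (1, -1, -1)
    + f (-1, 1, 1) + f (-1, 1, -1) + f (-1, -1, 1) + f (-1, -1, -1)"
  by (simp add: signs_def sum.cartesian_product[symmetric] algebra_simps)

lemma chi_cond_iff:
  "chi_cond p1 p2 p3 e1 e2 e3 n \<longleftrightarrow> (e1, e2, e3) \<in> signs \<and>
    n mod int (2 * p1 * p2 * p3) = chi_point p1 p2 p3 (e1, e2, e3) mod int (2 * p1 * p2 * p3)"
  unfolding chi_cond_def signs_def chi_point_def by auto

definition chi_residue :: "nat \<Rightarrow> nat \<Rightarrow> nat \<Rightarrow> int \<times> int \<times> int \<Rightarrow> nat" where
  "chi_residue p1 p2 p3 e = nat (chi_point p1 p2 p3 e mod int (2 * p1 * p2 * p3))"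

lemma int_chi_residue:
  "0 < p1 * p2 * p3 \<Longrightarrow> int (chi_residue p1 p2 p3 e) = chi_point p1 p2 p3 e mod int (2 * p1 * p2 * p3)"
  by (simp add: chi_residue_def)

lemma chi_chi_residue:
  assumes "0 < p1 * p2 * p3" and "inj_on (chi_residue p1 p2 p3) signs" and "e \<in> signs"
  shows "chi p1 p2 p3 (int (chi_residue p1 p2 p3 e)) = - of_int (sign_product e)"
proof -
  define N where "N = 2 * p1 * p2 * p3"
  define r where "r = chi_residue p1 p2 p3"
  have residue: "chi_point p1 p2 p3 e' mod int N = int (r e')" for e'
    unfolding N_def r_def by (rule int_chi_residue[OF assms(1), symmetric])
  then have "int (r e) mod int N = int (r e)" by (metis mod_mod_trivial)
  then have "chi_cond p1 p2 p3 x y z (int (r e)) \<longleftrightarrow> (x, y, z) \<in> signs \<and> r e = r (x, y, z)" for x y z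
    unfolding chi_cond_iff[of p1 p2 p3, folded N_def] residue by simp
  then have cond: "chi_cond p1 p2 p3 x y z (int (r e)) \<longleftrightarrow> (x, y, z) = e" for x y z
    using inj_onD[OF assms(2)[folded r_def]] assms(3) by blast
  obtain e1 e2 e3 where e: "e = (e1, e2, e3)" by (cases e) auto
  have "e1 * e2 * e3 \<in> {1, -1}" using assms(3) by (auto simp: e signs_def)
  then show ?thesis
    using cond unfolding r_def by (auto simp: chi_def sign_product_def e simp del: of_int_mult)
qed

lemma chi_eq_0_off_residues:
  assumes "0 < p1 * p2 * p3" and "0 \<notin> chi_residue p1 p2 p3 ` signs"
    and "j \<in> {1..2 * p1 * p2 * p3} - chi_residue p1 p2 p3 ` signs"
  shows "chi p1 p2 p3 (int j) = 0"
proof -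
  define N where "N = 2 * p1 * p2 * p3"
  have residue: "chi_point p1 p2 p3 e mod int N = int (chi_residue p1 p2 p3 e)" for e
    unfolding N_def by (rule int_chi_residue[OF assms(1), symmetric])
  have "int j mod int N \<noteq> chi_point p1 p2 p3 e mod int N" if "e \<in> signs" for e
  proof (cases "j = N")
    case True
    then show ?thesis using assms(2) that by (force simp: residue)
  next
    case False
    then have "j < N" using assms(3) by (simp add: N_def)
    then have "int j mod int N = int j" by simp
    then show ?thesis using assms(3) that by (force simp: residue)
  qed
  then have "\<not> chi_cond p1 p2 p3 x y z (int j)" for x y z
    unfolding chi_cond_iff[of p1 p2 p3, folded N_def] by blast
  then show ?thesis by (simp add: chi_def)
qed

lemma bernoulli_poly_1: "bernoulli_poly 1 x = x - 1/2"
  by (simp add: bernoulli_poly_def bernoulli_num.simps[of 0] bernoulli_num.simps[of 1])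

lemma sum_chi_mult:
  assumes "0 < p1 * p2 * p3" and "inj_on (chi_residue p1 p2 p3) signs"
    and "0 \<notin> chi_residue p1 p2 p3 ` signs"
  shows "(\<Sum>j=1..2 * p1 * p2 * p3. chi p1 p2 p3 (int j) * g j) =
    (\<Sum>e\<in>signs. - of_int (sign_product e) * g (chi_residue p1 p2 p3 e))"
proof -
  have "int (chi_residue p1 p2 p3 e) < int (2 * p1 * p2 * p3)" for e
    unfolding int_chi_residue[OF assms(1)] using assms(1) by (intro pos_mod_bound) simp
  then have "chi_residue p1 p2 p3 e < 2 * p1 * p2 * p3" for e
    by (simp only: of_nat_less_iff)
  moreover have "chi_residue p1 p2 p3 e \<noteq> 0" if "e \<in> signs" for e
    using assms(3) that by force
  ultimately have "chi_residue p1 p2 p3 ` signs \<subseteq> {1..2 * p1 * p2 * p3}"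
    by (auto simp: Suc_le_eq less_imp_le)
  then have "(\<Sum>j=1..2 * p1 * p2 * p3. chi p1 p2 p3 (int j) * g j) =
      (\<Sum>j\<in>chi_residue p1 p2 p3 ` signs. chi p1 p2 p3 (int j) * g j)"
    using chi_eq_0_off_residues[OF assms(1,3)] by (intro sum.mono_neutral_right) auto
  also have "\<dots> = (\<Sum>e\<in>signs. chi p1 p2 p3 (int (chi_residue p1 p2 p3 e)) * g (chi_residue p1 p2 p3 e))"
    by (rule sum.reindex[OF assms(2), unfolded comp_def])
  also have "\<dots> = (\<Sum>e\<in>signs. - of_int (sign_product e) * g (chi_residue p1 p2 p3 e))"
    by (intro sum.cong refl) (simp add: chi_chi_residue[OF assms(1,2)])
  finally show ?thesis .
qed

lemma Lval_0_eq_sum_signs: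
  assumes "0 < p1 * p2 * p3" and "inj_on (chi_residue p1 p2 p3) signs"
    and "0 \<notin> chi_residue p1 p2 p3 ` signs"
  shows "Lval p1 p2 p3 0 = (\<Sum>e\<in>signs. of_int (sign_product e) *
    (real (chi_residue p1 p2 p3 e) / real (2 * p1 * p2 * p3) - 1/2))"
  unfolding Lval_def Let_def
  using sum_chi_mult[OF assms, of "\<lambda>j. bernoulli_poly 1 (real j / real (2 * p1 * p2 * p3))"]
  by (simp add: bernoulli_poly_1[unfolded One_nat_def] sum_negf)

lemma linear_relation_coeff_eq_0:
  fixes p1 p2 p3 :: nat and h1 h2 h3 :: int
  assumes "h1 * int (p2 * p3) + h2 * int (p1 * p3) + h3 * int (p1 * p2) = 0"
    and "1 < p1" and "coprime p1 (p2 * p3)" and "\<bar>h1\<bar> \<le> 1"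
  shows "h1 = 0"
proof (rule ccontr)
  assume "h1 \<noteq> 0"
  have "h1 * int (p2 * p3) = int p1 * - (h2 * int p3 + h3 * int p2)"
    using assms(1) by (simp add: algebra_simps)
  then have "int p1 dvd h1 * int (p2 * p3)" by simp
  then have "int p1 dvd h1" using assms(3) by (simp add: coprime_dvd_mult_left_iff)
  then have "int p1 \<le> \<bar>h1\<bar>" using \<open>h1 \<noteq> 0\<close> by (metis dvd_imp_le_int abs_of_nat)
  then show False using assms(2,4) by simp
qed

lemma inj_on_chi_point:
  assumes "1 < p1" and "1 < p2" and "1 < p3"
    and "coprime p1 p2" and "coprime p1 p3" and "coprime p2 p3"
  shows "inj_on (chi_point p1 p2 p3) signs"
proof (rule inj_onI)
  fix e e' assume "e \<in> signs" "e' \<in> signs" and eq: "chi_point p1 p2 p3 e = chi_point p1 p2 p3 e'"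
  obtain x y z x' y' z' where e: "e = (x, y, z)" "e' = (x', y', z')" by (cases e, cases e') auto
  define h where "h u v = (u - v) div 2" for u v :: int
  have half: "u - v = 2 * h u v" "\<bar>h u v\<bar> \<le> 1" if "u \<in> {1, -1}" "v \<in> {1, -1}" for u v
    using that by (auto simp: h_def)
  have coords: "x \<in> {1, -1}" "y \<in> {1, -1}" "z \<in> {1, -1}" "x' \<in> {1, -1}" "y' \<in> {1, -1}" "z' \<in> {1, -1}"
    using \<open>e \<in> signs\<close> \<open>e' \<in> signs\<close> by (auto simp: e signs_def)
  have "(x - x') * int (p2 * p3) + (y - y') * int (p1 * p3) + (z - z') * int (p1 * p2) = 0"
    using eq by (simp add: e chi_point_def algebra_simps)
  then have lin: "h x x' * int (p2 * p3) + h y y' * int (p1 * p3) + h z z' * int (p1 * p2) = 0"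
    using half(1)[OF coords(1,4)] half(1)[OF coords(2,5)] half(1)[OF coords(3,6)] by simp
  have "h x x' = 0"
    using linear_relation_coeff_eq_0[OF lin] assms half(2)[OF coords(1,4)] by simp
  moreover have "h y y' = 0"
    using linear_relation_coeff_eq_0[of "h y y'" p1 p3 "h x x'" p2 "h z z'"] lin assms half(2)[OF coords(2,5)]
    by (simp add: algebra_simps coprime_commute)
  moreover have "h z z' = 0"
    using linear_relation_coeff_eq_0[of "h z z'" p1 p2 "h x x'" p3 "h y y'"] lin assms half(2)[OF coords(3,6)]
    by (simp add: algebra_simps coprime_commute)
  ultimately show "e = e'"
    using half(1)[OF coords(1,4)] half(1)[OF coords(2,5)] half(1)[OF coords(3,6)] by (simp add: e)
qed

lemma chi_point_bounds:
  assumes "p2 * p3 + p1 * p3 + p1 * p2 < p1 * p2 * p3" and "e \<in> signs"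
  shows "0 < chi_point p1 p2 p3 e" and "chi_point p1 p2 p3 e < int (2 * p1 * p2 * p3)"
proof -
  obtain x y z where e: "e = (x, y, z)" and "x \<in> {1, -1}" "y \<in> {1, -1}" "z \<in> {1, -1}"
    using assms(2) by (auto simp: signs_def)
  have unit_mult: "- int m \<le> u * int m \<and> u * int m \<le> int m" if "u \<in> {1, -1}" for u m
    using that by auto
  have "int (p2 * p3) + int (p1 * p3) + int (p1 * p2) < int (p1 * p2 * p3)"
    using assms(1) by linarith
  then show "0 < chi_point p1 p2 p3 e" and "chi_point p1 p2 p3 e < int (2 * p1 * p2 * p3)"
    using unit_mult[OF \<open>x \<in> {1, -1}\<close>, of "p2 * p3"] unit_mult[OF \<open>y \<in> {1, -1}\<close>, of "p1 * p3"]
      unit_mult[OF \<open>z \<in> {1, -1}\<close>, of "p1 * p2"]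
    unfolding chi_point_def e by simp_all
qed

lemma Lval_0_hyperbolic:
  assumes "1 < p1" and "1 < p2" and "1 < p3"
    and "coprime p1 p2" and "coprime p1 p3" and "coprime p2 p3"
    and "p2 * p3 + p1 * p3 + p1 * p2 < p1 * p2 * p3"
  shows "Lval p1 p2 p3 0 = 0"
proof -
  have "0 < p1 * p2 * p3" using assms(1-3) by simp
  have residue: "int (chi_residue p1 p2 p3 e) = chi_point p1 p2 p3 e" if "e \<in> signs" for e
    using chi_point_bounds[OF assms(7) that] by (simp add: chi_residue_def)
  have "inj_on (chi_residue p1 p2 p3) signs"
  proof (rule inj_onI)
    fix e e' assume "e \<in> signs" "e' \<in> signs" "chi_residue p1 p2 p3 e = chi_residue p1 p2 p3 e'"
    then have "chi_point p1 p2 p3 e = chi_point p1 p2 p3 e'" using residue by metis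
    then show "e = e'" using inj_onD[OF inj_on_chi_point[OF assms(1-6)]] \<open>e \<in> signs\<close> \<open>e' \<in> signs\<close>
      by blast
  qed
  moreover have "0 \<notin> chi_residue p1 p2 p3 ` signs"
    using chi_point_bounds(1)[OF assms(7)] residue by force
  ultimately have "Lval p1 p2 p3 0 = (\<Sum>e\<in>signs. of_int (sign_product e) *
      (real (chi_residue p1 p2 p3 e) / real (2 * p1 * p2 * p3) - 1/2))"
    by (rule Lval_0_eq_sum_signs[OF \<open>0 < p1 * p2 * p3\<close>])
  also have "\<dots> = (\<Sum>e\<in>signs. of_int (sign_product e) *
      (of_int (chi_point p1 p2 p3 e) / real (2 * p1 * p2 * p3) - 1/2))"
    by (intro sum.cong refl) (metis residue of_int_of_nat_eq)
  also have "\<dots> = 0" \<comment> \<open>every monomial of the expanded sum is odd in one of the signs\<close>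
    using \<open>0 < p1 * p2 * p3\<close> by (simp add: sum_signs sign_product_def chi_point_def field_simps)
  finally show ?thesis .
qed

lemma Lval_0_poincare: "Lval 2 3 5 0 = -2"
proof -
  have "inj_on (chi_residue 2 3 5) signs" "0 \<notin> chi_residue 2 3 5 ` signs"
    unfolding inj_on_def signs_def chi_residue_def chi_point_def by auto
  then show ?thesis
    by (subst Lval_0_eq_sum_signs) (simp_all add: sum_signs sign_product_def chi_residue_def chi_point_def)
qed

lemma hyperbolic_triple_bounds:
  fixes p1 p2 p3 :: nat
  assumes "0 < p1" and "0 < p2" and "0 < p3" and "1 / real p1 + 1 / real p2 + 1 / real p3 < 1"
  shows "1 < p1" and "1 < p2" and "1 < p3" and "p2 * p3 + p1 * p3 + p1 * p2 < p1 * p2 * p3"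
proof -
  have "0 < 1 / real p1" "0 < 1 / real p2" "0 < 1 / real p3" using assms(1-3) by simp_all
  then have "1 / real p1 < 1" "1 / real p2 < 1" "1 / real p3 < 1" using assms(4) by linarith+
  then show "1 < p1" "1 < p2" "1 < p3" using assms(1-3) by (simp_all add: field_simps)
  have "real (p2 * p3 + p1 * p3 + p1 * p2) = real (p1 * p2 * p3) * (1 / real p1 + 1 / real p2 + 1 / real p3)"
    using assms(1-3) by (simp add: field_simps)
  also have "\<dots> < real (p1 * p2 * p3) * 1"
    using assms by (intro mult_strict_left_mono) simp_all
  finally have "real (p2 * p3 + p1 * p3 + p1 * p2) < real (p1 * p2 * p3)" by simp
  then show "p2 * p3 + p1 * p3 + p1 * p2 < p1 * p2 * p3" by (simp only: of_nat_less_iff)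
qed

theorem mainTheorem6:
  shows "(\<forall>p1 p2 p3 :: nat. 0 < p1 \<and> 0 < p2 \<and> 0 < p3 \<and>
            coprime p1 p2 \<and> coprime p1 p3 \<and> coprime p2 p3 \<and>
            1 / real p1 + 1 / real p2 + 1 / real p3 < 1 \<longrightarrow>
            (\<forall>n. tau_infty p1 p2 p3 $ n = Lambda n p1 p2 p3))
       \<and> (\<forall>n. tau_infty_poincare $ n = Lambda n 2 3 5 + (-1) ^ (n + 1))"
proof (intro conjI allI impI)
  fix p1 p2 p3 n :: nat
  assume "0 < p1 \<and> 0 < p2 \<and> 0 < p3 \<and> coprime p1 p2 \<and> coprime p1 p3 \<and> coprime p2 p3 \<and>
    1 / real p1 + 1 / real p2 + 1 / real p3 < 1"
  then have pos: "0 < p1" "0 < p2" "0 < p3"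
    and coprime: "coprime p1 p2" "coprime p1 p3" "coprime p2 p3"
    and bounds: "1 < p1" "1 < p2" "1 < p3" "p2 * p3 + p1 * p3 + p1 * p2 < p1 * p2 * p3"
    using hyperbolic_triple_bounds by auto
  show "tau_infty p1 p2 p3 $ n = Lambda n p1 p2 p3"
    by (rule tau_infty_nth[OF Lval_0_hyperbolic[OF bounds(1-3) coprime bounds(4)]
          phi_ne_2[OF bounds(1) pos(2,3) coprime]])
next
  show "tau_infty_poincare $ n = Lambda n 2 3 5 + (-1) ^ (n + 1)" for n
    by (rule tau_infty_poincare_nth[OF Lval_0_poincare phi_poincare])
qed

end
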